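(* Let $P$ be a finite graded bowtie-free poset of rank $n$ with $\hat0,\hat1$ and a good $\mathcal{H}_n(0)$ action $U_1,\dots,U_{n-1}$. Then for every $S\subseteq[n-1]$, $\alpha_P(S)$ equals the number of maximal chains of $P$ whose descent set is contained in $S$. In particular, $P$ has exactly one maximal chain with empty descent set.
   Context: Bowtie-free: no distinct $a,b,c,d$ with $a$ and $b$ each covering both $c$ and $d$. A good $\mathcal{H}_n(0)$ action is a family $U_1,\dots,U_{n-1}$ of maps on the set $\mathcal{M}(P)$ of maximal chains with: (1) $U_i(\mathfrak m)$ agrees with $\mathfrak m$ except possibly at rank $i$; (2) $U_i^2=U_i$; (3) $U_iU_j=U_jU_i$ for $|i-j|\ge2$; (4) $U_iU_{i+1}U_i=U_{i+1}U_iU_{i+1}$; (5) $\omega F_P(x)=\mathrm{ch}(\chi_P)$, where $\chi_P$ is the character of the representation of $\mathcal{H}_n(0)$ (generated by $T_i$ with $T_i^2=-T_i$ and the commutation/braid relations) on $\mathbb{C}\mathcal{M}(P)$ with $T_i$ acting as $-U_i$; $F_P(x)=\sum x_1^{\mathrm{rk}(t_0,t_1)}\cdots x_k^{\mathrm{rk}(t_{k-1},t_k)}$ over multichains $\hat0=t_0\le\cdots\le t_{k-1}<t_k=\hat1$; $L_{S,n}=\sum_{1\le i_1\le\cdots\le i_n,\ i_j<i_{j+1}\ (j\in S)}x_{i_1}\cdots x_{i_n}$; $\omega(L_{S,n})=L_{[n-1]\setminus S,n}$; $\mathrm{ch}$ linear with $\mathrm{ch}(\chi_S)=L_{S,n}$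 for $\chi_S$ the character of the one-dimensional representation $T_i\mapsto-1$ ($i\in S$), $T_i\mapsto0$ ($i\notin S$). The descent set of a maximal chain $\mathfrak m$ is $\{i\in[n-1]:U_i(\mathfrak m)\ne\mathfrak m\}$. The flag $f$-vector $\alpha_P(S)$ is the number of chains $\hat0<t_1<\cdots<t_{|S|}<\hat1$ with $\{\mathrm{rk}(t_1),\dots,\mathrm{rk}(t_{|S|})\}=S$. *)

theory Defs
  imports Main
begin

(* Finite posets are modelled as a carrier set P inside a type with an order. *)

definition is_chain :: "'a::order set \<Rightarrow> 'a set \<Rightarrow> bool" where
  "is_chain P C \<longleftrightarrow> C \<subseteq> P \<and> (\<forall>x\<in>C. \<forall>y\<in>C. x \<le> y \<or> y \<le> x)"

definition maximal_chain :: "'a::order set \<Rightarrow> 'a set \<Rightarrow> bool" where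
  "maximal_chain P C \<longleftrightarrow> is_chain P C \<and> (\<forall>D. is_chain P D \<and> C \<subseteq> D \<longrightarrow> D = C)"

definition MC :: "'a::order set \<Rightarrow> 'a set set" where
  "MC P = {C. maximal_chain P C}"

definition covers :: "'a::order set \<Rightarrow> 'a \<Rightarrow> 'a \<Rightarrow> bool" where
  "covers P y x \<longleftrightarrow> x \<in> P \<and> y \<in> P \<and> x < y \<and> \<not> (\<exists>z\<in>P. x < z \<and> z < y)"

(* finite poset with bottom bt and tp tp, graded of rank n:
   every maximal chain has length n, i.e. n+1 elements *)
definition graded_bounded :: "'a::order set \<Rightarrow> nat \<Rightarrow> 'a \<Rightarrow> 'a \<Rightarrow> bool" where
  "graded_bounded P n bt tp \<longleftrightarrow> finite P \<and> bt \<in> P \<and> tp \<in> P \<and>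
     (\<forall>x\<in>P. bt \<le> x \<and> x \<le> tp) \<and> (\<forall>C\<in>MC P. card C = n + 1)"

definition bowtie_free :: "'a::order set \<Rightarrow> bool" where
  "bowtie_free P \<longleftrightarrow> \<not> (\<exists>a b c d. distinct [a, b, c, d] \<and>
      covers P a c \<and> covers P a d \<and> covers P b c \<and> covers P b d)"

definition rk :: "'a::order set \<Rightarrow> 'a \<Rightarrow> nat" where
  "rk P x = Max {card C | C. is_chain P C \<and> (\<forall>y\<in>C. y \<le> x)} - 1"

definition Des :: "nat \<Rightarrow> (nat \<Rightarrow> 'a set \<Rightarrow> 'a set) \<Rightarrow> 'a set \<Rightarrow> nat set" where
  "Des n U m = {i \<in> {1..<n}. U i m \<noteq> m}"

definition flag_f :: "'a::order set \<Rightarrow> 'a \<Rightarrow> 'a \<Rightarrow> nat set \<Rightarrow> nat" where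
  "flag_f P bt tp S = card {T. is_chain P T \<and> (\<forall>t\<in>T. bt < t \<and> t < tp)
       \<and> card T = card S \<and> rk P ` T = S}"

(* Formal power series in the variables x_1, x_2, ... with integer coefficients:
   a monomial is an exponent vector e :: nat => nat (e i = exponent of x_i, e 0 = 0),
   a series is its coefficient function. *)
type_synonym qseries = "(nat \<Rightarrow> nat) \<Rightarrow> int"

definition Lfun :: "nat set \<Rightarrow> nat \<Rightarrow> qseries" where
  "Lfun S n e = int (card {i :: nat list. length i = n \<and> (\<forall>j<n. 1 \<le> i ! j) \<and> sorted i
       \<and> (\<forall>j\<in>S. 1 \<le> j \<and> j < n \<longrightarrow> i ! (j - 1) < i ! j)
       \<and> (\<forall>k. count_list i k = e k)})"

definition FP :: "'a::order set \<Rightarrow> 'a \<Rightarrow> 'a \<Rightarrow> qseries" where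
  "FP P bt tp e = int (card {ts. \<exists>k\<ge>1. length ts = k + 1 \<and> set ts \<subseteq> P
       \<and> ts ! 0 = bt \<and> ts ! k = tp
       \<and> (\<forall>j. j + 1 < k \<longrightarrow> ts ! j \<le> ts ! (j + 1)) \<and> ts ! (k - 1) < ts ! k
       \<and> e 0 = 0 \<and> (\<forall>j\<in>{1..k}. e j = rk P (ts ! j) - rk P (ts ! (j - 1)))
       \<and> (\<forall>j>k. e j = 0)})"

definition omega :: "nat \<Rightarrow> qseries \<Rightarrow> qseries" where
  "omega n F = (THE G. \<exists>d :: nat set \<Rightarrow> int.
       F = (\<lambda>e. \<Sum>S\<in>Pow {1..<n}. d S * Lfun S n e) \<and>
       G = (\<lambda>e. \<Sum>S\<in>Pow {1..<n}. d S * Lfun ({1..<n} - S) n e))"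

(* Characters of H_n(0)-representations, as functions on words: the value on
   the word [i_1,...,i_k] is the trace of T_{i_1} ... T_{i_k}.  Words with a
   letter outside [n-1] get value 0 (they are not elements of H_n(0)). *)
type_synonym hchar = "nat list \<Rightarrow> int"

definition chiS :: "nat \<Rightarrow> nat set \<Rightarrow> hchar" where
  "chiS n S w = (if set w \<subseteq> {1..<n} then (\<Prod>i\<leftarrow>w. if i \<in> S then -1 else 0) else 0)"

(* character of C M(P) with T_i acting as -U_i: the trace of the linear
   extension of a map f on the basis M equals the number of fixed points *)
definition chiP :: "nat \<Rightarrow> (nat \<Rightarrow> 'a set \<Rightarrow> 'a set) \<Rightarrow> 'a set set \<Rightarrow> hchar" where
  "chiP n U M w = (if set w \<subseteq> {1..<n} then
      (-1) ^ length w * int (card {m \<in> M. foldr (\<lambda>i f. U i \<circ> f) w id m = m}) else 0)"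

definition ch :: "nat \<Rightarrow> hchar \<Rightarrow> qseries" where
  "ch n \<chi> = (THE G. \<exists>c :: nat set \<Rightarrow> int.
       \<chi> = (\<lambda>w. \<Sum>S\<in>Pow {1..<n}. c S * chiS n S w) \<and>
       G = (\<lambda>e. \<Sum>S\<in>Pow {1..<n}. c S * Lfun S n e))"

definition good_action :: "'a::order set \<Rightarrow> nat \<Rightarrow> 'a \<Rightarrow> 'a \<Rightarrow> (nat \<Rightarrow> 'a set \<Rightarrow> 'a set) \<Rightarrow> bool" where
  "good_action P n bt tp U \<longleftrightarrow>
     (\<forall>i\<in>{1..<n}. \<forall>m\<in>MC P. U i m \<in> MC P \<and>
         {x \<in> m. rk P x \<noteq> i} = {x \<in> U i m. rk P x \<noteq> i}) \<and>
     (\<forall>i\<in>{1..<n}. \<forall>m\<in>MC P. U i (U i m) = U i m) \<and>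
     (\<forall>i\<in>{1..<n}. \<forall>j\<in>{1..<n}. \<forall>m\<in>MC P. (i + 2 \<le> j \<or> j + 2 \<le> i) \<longrightarrow> U i (U j m) = U j (U i m)) \<and>
     (\<forall>i. 1 \<le> i \<and> i + 1 < n \<longrightarrow> (\<forall>m\<in>MC P. U i (U (i+1) (U i m)) = U (i+1) (U i (U (i+1) m)))) \<and>
     omega n (FP P bt tp) = ch n (chiP n U (MC P))"

end

theory Submission
  imports Defs "HOL-Library.Multiset"
begin

text \<open>In the \<open>0\<close>-Hecke monoid, the powers of a word with letter set \<open>J\<close> eventually equal
  the longest element of the parabolic subgroup generated by \<open>J\<close>, which absorbs every letter
  of \<open>J\<close>. Hence a maximal chain fixed by a word is fixed by each of its letters, so
  \<open>\<chi>\<^sub>P(w) = (-1)^length w * #{m. set w \<inter> Des m = {}}\<close>, that is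
  \<open>\<chi>\<^sub>P = \<Sum>\<^sub>m \<chi>\<^bsub>[n-1] - Des m\<^esub>\<close> and \<open>ch \<chi>\<^sub>P = \<Sum>\<^sub>m L\<^bsub>[n-1] - Des m\<^esub>\<close>.
  On the other side, evaluating \<open>F\<^sub>P\<close> at each monomial shows \<open>F\<^sub>P = \<Sum>\<^sub>S \<beta>(S) L\<^sub>S\<close>, where the
  flag \<open>h\<close>-vector \<open>\<beta>\<close> is the Moebius inverse of \<open>\<alpha>\<close>, so \<open>\<omega> F\<^sub>P = \<Sum>\<^sub>S \<beta>(S) L\<^bsub>[n-1] - S\<^esub>\<close>.
  Since the \<open>L\<^sub>S\<close> are linearly independent, \<open>\<beta>(S)\<close> is the number of maximal chains with
  descent set \<open>S\<close>, and summing over the subsets of \<open>S\<close> gives \<open>\<alpha>(S)\<close>.\<close>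

section \<open>Fixed points of \<open>0\<close>-Hecke monoid actions\<close>

definition word_power :: "nat \<Rightarrow> 'b list \<Rightarrow> 'b list" where
  "word_power N w = concat (replicate N w)"

lemma word_power_0 [simp]: "word_power 0 w = []"
  by (simp add: word_power_def)

lemma word_power_Suc: "word_power (Suc N) w = w @ word_power N w"
  by (simp add: word_power_def)

lemma word_power_Suc_right: "word_power (Suc N) w = word_power N w @ w"
  unfolding word_power_def by (induct N) auto

lemma word_power_add: "word_power (N + M) w = word_power N w @ word_power M w"
  by (simp add: word_power_def replicate_add)

lemma set_word_power: "set (word_power N w) \<subseteq> set w"
  by (auto simp: word_power_def)

lemma map_filter_word_power:
  "map f (filter Q (word_power N w)) = word_power N (map f (filter Q w))"
  unfolding word_power_def by (induct N) auto

definition delete_renumber :: "nat \<Rightarrow> nat list \<Rightarrow> nat list" where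
  "delete_renumber a v = map (\<lambda>i. if a < i then i - 1 else i) (filter (\<lambda>i. i \<noteq> a) v)"

lemma delete_renumber_word_power:
  "delete_renumber a (word_power N w) = word_power N (delete_renumber a w)"
  by (simp add: delete_renumber_def map_filter_word_power)

lemma top_block:
  fixes J :: "nat set"
  assumes "0 \<notin> J" "b \<in> J"
  obtains a where "{a..b} \<subseteq> J" "a \<le> b" "a - 1 \<notin> J"
proof -
  define a where "a = (LEAST a. {a..b} \<subseteq> J)"
  have block: "{a..b} \<subseteq> J" "a \<le> b"
    unfolding a_def by (rule LeastI[of _ b], use assms in auto) (rule Least_le, use assms in auto)
  then have "1 \<le> a"
    using assms(1) by (cases a) auto
  have "a - 1 \<notin> J"
  proof
    assume "a - 1 \<in> J"
    moreover have "{a - 1..b} = insert (a - 1) {a..b}"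
      using block by auto
    ultimately have "{a - 1..b} \<subseteq> J"
      using block by auto
    then have "a \<le> a - 1"
      unfolding a_def by (rule Least_le)
    then show False
      using \<open>1 \<le> a\<close> by simp
  qed
  then show thesis
    using that block by blast
qed

locale zero_hecke_action =
  fixes e :: "nat \<Rightarrow> 'x \<Rightarrow> 'x" and n :: nat
  assumes idem: "i \<in> {1..<n} \<Longrightarrow> e i (e i x) = e i x"
    and far_comm: "i \<in> {1..<n} \<Longrightarrow> j \<in> {1..<n} \<Longrightarrow> i + 2 \<le> j \<Longrightarrow> e i (e j x) = e j (e i x)"
    and braid: "1 \<le> i \<Longrightarrow> i + 1 < n \<Longrightarrow> e i (e (i+1) (e i x)) = e (i+1) (e i (e (i+1) x))"
begin

definition act :: "nat list \<Rightarrow> 'x \<Rightarrow> 'x" where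
  "act w = foldr (\<lambda>i f. e i \<circ> f) w id"

lemma act_Nil [simp]: "act [] = id"
  by (simp add: act_def)

lemma act_Cons [simp]: "act (i # w) x = e i (act w x)"
  by (simp add: act_def)

lemma act_append: "act (v @ w) x = act v (act w x)"
  by (induct v) auto

lemma act_absorb: "\<forall>s\<in>set u. \<forall>x. e s (p x) = p x \<Longrightarrow> act u (p x) = p x"
  by (induct u) auto

lemma act_far_comm:
  assumes "i \<in> {1..<n}" "set v \<subseteq> {1..<n}" "\<forall>j\<in>set v. i + 2 \<le> j"
  shows "e i (act v x) = act v (e i x)"
  using assms by (induct v) (auto simp: far_comm)

definition stair :: "nat \<Rightarrow> nat \<Rightarrow> 'x \<Rightarrow> 'x" where
  "stair b j = act (rev [j..<Suc b])"

lemma stair_top: "stair b (Suc b) x = x"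
  by (simp add: stair_def)

lemma stair_step:
  assumes "j \<le> b"
  shows "stair b j x = stair b (Suc j) (e j x)"
proof -
  have "[j..<Suc b] = j # [Suc j..<Suc b]"
    using assms by (simp add: upt_conv_Cons)
  then show ?thesis
    by (simp add: stair_def act_append)
qed

lemma stair_far_comm:
  assumes "i \<in> {1..<n}" "b < n" "1 \<le> j" "i + 2 \<le> j"
  shows "stair b j (e i x) = e i (stair b j x)"
  unfolding stair_def using assms by (intro act_far_comm[symmetric]) auto

lemma stair_shift:
  assumes "1 \<le> j" "b < n" "j < i" "i \<le> b"
  shows "stair b j (e i x) = e (i - 1) (stair b j x)"
  using assms
proof (induction "b - j" arbitrary: j x rule: less_induct)
  case less
  have step: "stair b j y = stair b (Suc j) (e j y)" for y
    using less by (intro stair_step) auto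
  show ?case
  proof (cases "i = Suc j")
    case True
    have step2: "stair b (Suc j) y = stair b (Suc (Suc j)) (e (Suc j) y)" for y
      using less True by (intro stair_step) auto
    have "stair b j (e i x) = stair b (Suc (Suc j)) (e (Suc j) (e j (e (Suc j) x)))"
      using True by (simp add: step step2)
    also have "\<dots> = stair b (Suc (Suc j)) (e j (e (Suc j) (e j x)))"
      using braid[of j] less True by simp
    also have "\<dots> = e j (stair b (Suc (Suc j)) (e (Suc j) (e j x)))"
      using stair_far_comm[of j b "Suc (Suc j)"] less True by auto
    also have "\<dots> = e (i - 1) (stair b j x)"
      using True by (simp add: step step2)
    finally show ?thesis .
  next
    case False
    then have "Suc j < i" using less by auto
    then have "stair b j (e i x) = stair b (Suc j) (e i (e j x))"
      using step far_comm[of j i] less by auto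
    also have "\<dots> = e (i - 1) (stair b j x)"
      using less.hyps[of "Suc j"] step less \<open>Suc j < i\<close> by auto
    finally show ?thesis .
  qed
qed

context
  fixes J :: "nat set" and a b :: nat
  assumes J_range: "J \<subseteq> {1..<n}"
    and block: "{a..b} \<subseteq> J" "a \<le> b"
    and J_le_b: "\<forall>x\<in>J. x \<le> b"
    and below_block: "a - 1 \<notin> J"
begin

lemma block_bounds: "1 \<le> a" "b < n"
proof -
  have "a \<in> J" "b \<in> J"
    using block by auto
  then show "1 \<le> a" "b < n"
    using J_range by auto
qed

lemma stair_letter:
  assumes j: "a \<le> j" "j \<le> Suc b" and i: "i \<in> J"
  obtains u j' where "\<forall>x. stair b j (e i x) = act u (stair b j' x)"
    and "a \<le> j'" "j' \<le> j" "set u \<subseteq> J - {b}" "Suc i = j \<Longrightarrow> j' < j"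
proof -
  have i_range: "1 \<le> i" "i < n" "i \<le> b"
    using i J_range J_le_b by auto
  consider "Suc i = j" | "i = j" | "j < i" | "i + 2 \<le> j"
    by linarith
  then show thesis
  proof cases
    case 1
    then have "a \<le> i"
      using j i below_block by (cases "j = a") auto
    then show thesis
      using that[of "[]" i] 1 stair_step[of i b] i_range by auto
  next
    case 2
    then show thesis
      using that[of "[]" j] stair_step[of j b] idem[of j] i_range j by auto
  next
    case 3
    then have "i - 1 \<in> {a..b} - {b}"
      using i_range j by auto
    then have "i - 1 \<in> J - {b}"
      using block by blast
    with 3 show thesis
      using that[of "[i - 1]" j] stair_shift[of j b i] i_range j block block_bounds by auto
  next
    case 4
    then show thesis
      using that[of "[i]" j] stair_far_comm[of i b j] i i_range j block_bounds by auto
  qed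
qed

lemma stair_word:
  assumes "set v \<subseteq> J" "a \<le> j" "j \<le> Suc b"
  obtains u j' where "\<forall>x. stair b j (act v x) = act u (stair b j' x)"
    and "a \<le> j'" "j' \<le> j" "set u \<subseteq> J - {b}" "j - 1 \<in> set v \<Longrightarrow> a < j \<Longrightarrow> j' < j"
  using assms
proof (induction v arbitrary: j thesis)
  case Nil
  show ?case
    by (rule Nil.prems(1)[of "[]" j]) (use Nil.prems in auto)
next
  case (Cons i v)
  obtain u1 j1 where 1: "\<forall>x. stair b j (e i x) = act u1 (stair b j1 x)"
    "a \<le> j1" "j1 \<le> j" "set u1 \<subseteq> J - {b}" "Suc i = j \<Longrightarrow> j1 < j"
    using stair_letter[of j i] Cons.prems by auto
  obtain u2 j2 where 2: "\<forall>x. stair b j1 (act v x) = act u2 (stair b j2 x)"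
    "a \<le> j2" "j2 \<le> j1" "set u2 \<subseteq> J - {b}" "j1 - 1 \<in> set v \<Longrightarrow> a < j1 \<Longrightarrow> j2 < j1"
    using Cons.IH[of j1] Cons.prems 1 by auto
  have "j2 < j" if "j - 1 \<in> set (i # v)" "a < j"
    using that 1 2 by (cases "j1 < j") auto
  then show ?case
    by (intro Cons.prems(1)[of "u1 @ u2" j2]) (use 1 2 in \<open>auto simp: act_append\<close>)
qed

lemma stair_bottom:
  "set v \<subseteq> J \<Longrightarrow> stair b a (act v x) = act (delete_renumber a v) (stair b a x)"
proof (induction v)
  case Nil
  then show ?case by (simp add: delete_renumber_def)
next
  case (Cons i v)
  have i: "1 \<le> i" "i < n" "i \<le> b" "i \<noteq> a - 1"
    using Cons.prems J_range J_le_b below_block by auto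
  have "stair b a (e i y) = act (delete_renumber a [i]) (stair b a y)" for y
  proof -
    consider "i = a" | "a < i" | "i + 2 \<le> a"
      using i by linarith
    then show ?thesis
    proof cases
      case 1
      then show ?thesis
        using stair_step[of a b] idem[of a] i by (simp add: delete_renumber_def)
    next
      case 2
      then show ?thesis
        using stair_shift[of a b i] i block_bounds by (simp add: delete_renumber_def)
    next
      case 3
      then show ?thesis
        using stair_far_comm[of i b a] i block_bounds by (simp add: delete_renumber_def)
    qed
  qed
  then show ?case
    using Cons by (simp add: delete_renumber_def)
qed

lemma set_delete_renumber:
  assumes "set w = J"
  shows "set (delete_renumber a w) = J - {b}"
proof -
  let ?r = "\<lambda>i. if a < i then i - 1 else i"
  have "set (delete_renumber a w) = ?r ` (J - {a})"
    using assms by (auto simp: delete_renumber_def)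
  also have "\<dots> = J - {b}"
  proof
    show "?r ` (J - {a}) \<subseteq> J - {b}"
    proof
      fix y assume "y \<in> ?r ` (J - {a})"
      then obtain i where i: "i \<in> J" "i \<noteq> a" "y = ?r i" by blast
      show "y \<in> J - {b}"
      proof (cases "a < i")
        case True
        then have "y \<in> {a..b} - {b}"
          using i J_le_b by auto
        then show ?thesis
          using block by blast
      next
        case False
        then show ?thesis
          using i below_block J_le_b block by (cases "i = b") auto
      qed
    qed
  next
    show "J - {b} \<subseteq> ?r ` (J - {a})"
    proof
      fix y assume y: "y \<in> J - {b}"
      show "y \<in> ?r ` (J - {a})"
      proof (cases "y < a")
        case True
        then show ?thesis
          using y by (intro image_eqI[of y _ y]) auto
      next
        case False
        then have "Suc y \<in> {a..b}"
          using y J_le_b by fastforce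
        then have "Suc y \<in> J - {a}"
          using block False by auto
        then show ?thesis
          using False by (intro image_eqI[of y _ "Suc y"]) auto
      qed
    qed
  qed
  finally show ?thesis .
qed

text \<open>Each pass through \<open>w\<close> moves the staircase one step further down, since the letter
  just below its bottom occurs in \<open>w\<close>; after \<open>b + 1 - a\<close> passes it has reached \<open>a\<close>.\<close>

lemma stair_power_descends:
  assumes w: "set w = J"
  shows "\<exists>u j. set u \<subseteq> J - {b} \<and> a \<le> j \<and> j \<le> Suc b \<and> (j = a \<or> j + N \<le> Suc b)
    \<and> (\<forall>x. act (word_power N w) x = act u (stair b j x))"
proof (induction N)
  case 0
  show ?case
    by (intro exI[of _ "[]"] exI[of _ "Suc b"]) (use block in \<open>auto simp: stair_top\<close>)
next
  case (Suc N)
  then obtain u j where uj: "set u \<subseteq> J - {b}" "a \<le> j" "j \<le> Suc b" "j = a \<or> j + N \<le> Suc b"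
    "\<forall>x. act (word_power N w) x = act u (stair b j x)"
    by blast
  obtain u' j' where u'j': "\<forall>x. stair b j (act w x) = act u' (stair b j' x)"
    "a \<le> j'" "j' \<le> j" "set u' \<subseteq> J - {b}" "j - 1 \<in> set w \<Longrightarrow> a < j \<Longrightarrow> j' < j"
    using stair_word[of w j] w uj(2,3) by auto
  have "j - 1 \<in> set w" if "a < j"
  proof -
    have "j - 1 \<in> {a..b}"
      using that uj by auto
    then show ?thesis
      using block w by blast
  qed
  then have "j' = a \<or> j' + Suc N \<le> Suc b"
    using uj u'j' by (cases "a < j") auto
  moreover have "\<forall>x. act (word_power (Suc N) w) x = act (u @ u') (stair b j' x)"
    using uj(5) u'j'(1) by (simp add: word_power_Suc_right act_append)
  ultimately show ?case
    using uj u'j' by (intro exI[of _ "u @ u'"] exI[of _ j']) auto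
qed

lemma power_factors_through_stair:
  assumes w: "set w = J"
    and absorb: "\<forall>s\<in>J - {b}. \<forall>x. e s (p x) = p x"
    and limit: "\<forall>M\<ge>M0. act (word_power M (delete_renumber a w)) = p"
    and N: "Suc b - a + M0 \<le> N"
  shows "act (word_power N w) = p \<circ> stair b a"
proof
  fix x
  define K where "K = Suc b - a"
  obtain u j where u: "set u \<subseteq> J - {b}" "\<forall>x. act (word_power K w) x = act u (stair b j x)"
    and j: "a \<le> j" "j = a \<or> j + K \<le> Suc b"
    using stair_power_descends[OF w, of K] by blast
  have "j = a"
    using j block unfolding K_def by auto
  define M where "M = N - K"
  have M: "N = K + M" "M0 \<le> M"
    using N by (auto simp: K_def M_def)
  have "act (word_power N w) x = act u (stair b a (act (word_power M w) x))"
    using M u \<open>j = a\<close> by (simp add: word_power_add act_append)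
  also have "\<dots> = act u (act (word_power M (delete_renumber a w)) (stair b a x))"
    using stair_bottom[of "word_power M w"] set_word_power[of M w] w
    by (simp add: delete_renumber_word_power)
  also have "\<dots> = act u (p (stair b a x))"
    using limit M by simp
  also have "\<dots> = p (stair b a x)"
    using absorb u(1) by (intro act_absorb) auto
  finally show "act (word_power N w) x = (p \<circ> stair b a) x"
    by simp
qed

end

lemma power_limit_absorbs:
  assumes J: "finite J" "J \<subseteq> {1..<n}" and s: "s \<in> J"
    and limit: "\<forall>w. set w = J \<longrightarrow> (\<exists>N0. \<forall>N\<ge>N0. act (word_power N w) = p)"
  shows "e s (p x) = p x"
proof -
  define w where "w = s # sorted_list_of_set J"
  have "set w = J"
    using s J(1) by (auto simp: w_def)
  then obtain N0 where "\<forall>N\<ge>N0. act (word_power N w) = p"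
    using limit by blast
  then have "act (word_power (Suc N0) w) = p"
    by simp
  moreover have "word_power (Suc N0) w = s # (sorted_list_of_set J @ word_power N0 w)"
    by (simp add: word_power_Suc w_def)
  ultimately have "p x = e s (act (sorted_list_of_set J @ word_power N0 w) x)"
    by (metis act_Cons)
  then show ?thesis
    using idem[of s] s J(2) by auto
qed

text \<open>The limit \<open>p\<close> is the action of the longest element of the parabolic subgroup generated
  by \<open>J\<close>. It is built as the limit for \<open>J - {max J}\<close> composed with a staircase.\<close>

lemma powers_stabilize:
  assumes "finite J" "J \<subseteq> {1..<n}"
  shows "\<exists>p. (\<forall>s\<in>J. \<forall>x. e s (p x) = p x)
    \<and> (\<forall>w. set w = J \<longrightarrow> (\<exists>N0. \<forall>N\<ge>N0. act (word_power N w) = p))"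
  using assms
proof (induction J rule: finite_psubset_induct)
  case (psubset J)
  show ?case
  proof (cases "J = {}")
    case True
    then show ?thesis
      by (intro exI[of _ id]) (auto simp: word_power_def)
  next
    case False
    define b where "b = Max J"
    have b: "b \<in> J" "\<forall>x\<in>J. x \<le> b"
      using False psubset.hyps by (auto simp: b_def)
    have "0 \<notin> J"
      using psubset.prems by auto
    then obtain a where block: "{a..b} \<subseteq> J" "a \<le> b" and below: "a - 1 \<notin> J"
      using top_block b(1) by blast
    have "J - {b} \<subset> J" "J - {b} \<subseteq> {1..<n}"
      using b psubset.prems by auto
    from psubset.IH[OF this] obtain p where p: "\<forall>s\<in>J - {b}. \<forall>x. e s (p x) = p x"
      and limit: "\<forall>w. set w = J - {b} \<longrightarrow> (\<exists>N0. \<forall>N\<ge>N0. act (word_power N w) = p)"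
      by blast
    have "\<exists>N0. \<forall>N\<ge>N0. act (word_power N w) = p \<circ> stair b a" if w: "set w = J" for w
    proof -
      obtain M0 where "\<forall>M\<ge>M0. act (word_power M (delete_renumber a w)) = p"
        using limit set_delete_renumber[OF psubset.prems(1) block b(2) below w] by blast
      then show ?thesis
        using power_factors_through_stair[OF psubset.prems(1) block b(2) below w p] by blast
    qed
    then show ?thesis
      using power_limit_absorbs[OF psubset.hyps(1) psubset.prems]
      by (intro exI[of _ "p \<circ> stair b a"]) blast
  qed
qed

theorem act_fixed_imp_letter_fixed:
  assumes w: "set w \<subseteq> {1..<n}" and fixed: "act w x = x" and s: "s \<in> set w"
  shows "e s x = x"
proof -
  obtain p where absorb: "\<forall>s\<in>set w. \<forall>x. e s (p x) = p x"
    and "\<exists>N0. \<forall>N\<ge>N0. act (word_power N w) = p"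
    using powers_stabilize[of "set w"] w by auto
  then obtain N where N: "act (word_power N w) = p"
    by blast
  have "act (word_power N w) x = x" for N
    by (induct N) (simp_all add: word_power_Suc act_append fixed del: act_Cons)
  then have "p x = x"
    using N by metis
  then show ?thesis
    using absorb s by metis
qed

end

section \<open>Fundamental quasisymmetric functions at a monomial\<close>

text \<open>A monomial \<open>x\<^sup>e\<close> of degree \<open>n\<close> is encoded by the weakly increasing word of positive letters
  with content \<open>e\<close> (the lists counted by \<open>Lfun\<close>). Its ascent set is the set of proper partial
  sums of the composition underlying \<open>e\<close>.\<close>

definition content_word :: "nat \<Rightarrow> (nat \<Rightarrow> nat) \<Rightarrow> nat list \<Rightarrow> bool" where
  "content_word n e i \<longleftrightarrow>
     length i = n \<and> (\<forall>j<n. 1 \<le> i ! j) \<and> sorted i \<and> (\<forall>k. count_list i k = e k)"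

definition monomial :: "nat \<Rightarrow> (nat \<Rightarrow> nat) \<Rightarrow> bool" where
  "monomial n e \<longleftrightarrow> (\<exists>i. content_word n e i)"

definition content_word_of :: "nat \<Rightarrow> (nat \<Rightarrow> nat) \<Rightarrow> nat list" where
  "content_word_of n e = (THE i. content_word n e i)"

definition ascent_set :: "nat \<Rightarrow> (nat \<Rightarrow> nat) \<Rightarrow> nat set" where
  "ascent_set n e = {p \<in> {1..<n}. content_word_of n e ! (p - 1) < content_word_of n e ! p}"

definition partial_sum :: "(nat \<Rightarrow> nat) \<Rightarrow> nat \<Rightarrow> nat" where
  "partial_sum e j = (\<Sum>l\<in>{1..j}. e l)"

lemma partial_sum_0 [simp]: "partial_sum e 0 = 0"
  by (simp add: partial_sum_def)

lemma partial_sum_Suc: "partial_sum e (Suc j) = partial_sum e j + e (Suc j)"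
  by (simp add: partial_sum_def)

lemma partial_sum_mono: "j \<le> l \<Longrightarrow> partial_sum e j \<le> partial_sum e l"
  unfolding partial_sum_def by (rule sum_mono2) auto

lemma content_word_unique: "content_word n e i \<Longrightarrow> content_word n e i' \<Longrightarrow> i = i'"
proof -
  assume i: "content_word n e i" "content_word n e i'"
  then have "mset i = mset i'"
    by (auto simp: content_word_def multiset_eq_iff count_mset)
  then have "sort i' = i"
    using i by (intro properties_for_sort) (auto simp: content_word_def)
  then show ?thesis
    using i by (simp add: content_word_def sorted_sort_id)
qed

lemma content_word_of_eq: "content_word n e i \<Longrightarrow> content_word_of n e = i"
  unfolding content_word_of_def using content_word_unique by blast

lemma Lfun_eq:
  assumes S: "S \<subseteq> {1..<n}"
  shows "Lfun S n e = (if monomial n e \<and> S \<subseteq> ascent_set n e then 1 else 0)"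
proof -
  define Q where "Q i \<longleftrightarrow> (\<forall>j\<in>S. 1 \<le> j \<and> j < n \<longrightarrow> i ! (j - 1) < i ! j)" for i :: "nat list"
  have "Lfun S n e = int (card {i. content_word n e i \<and> Q i})"
    unfolding Lfun_def content_word_def Q_def by (simp only: conj_ac)
  also have "{i. content_word n e i \<and> Q i} =
    (if monomial n e \<and> S \<subseteq> ascent_set n e then {content_word_of n e} else {})"
  proof (cases "monomial n e")
    case True
    then obtain i where i: "content_word n e i"
      by (auto simp: monomial_def)
    then have "Q i \<longleftrightarrow> S \<subseteq> ascent_set n e"
      using S content_word_of_eq[OF i] by (auto simp: Q_def ascent_set_def)
    moreover have "{i'. content_word n e i' \<and> Q i'} = (if Q i then {i} else {})"
    proof (intro set_eqI)
      fix i'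
      show "i' \<in> {i'. content_word n e i' \<and> Q i'} \<longleftrightarrow> i' \<in> (if Q i then {i} else {})"
        using content_word_unique[OF i, of i'] i by auto
    qed
    ultimately show ?thesis
      using True content_word_of_eq[OF i] by simp
  qed (auto simp: monomial_def)
  finally show ?thesis
    by simp
qed

lemma sum_Lfun:
  "(\<Sum>S\<in>Pow {1..<n}. g S * Lfun S n e)
     = (if monomial n e then (\<Sum>S\<in>Pow (ascent_set n e). g S) else 0)"
proof -
  have "(\<Sum>S\<in>Pow {1..<n}. g S * Lfun S n e)
      = (\<Sum>S\<in>Pow {1..<n}. if monomial n e \<and> S \<subseteq> ascent_set n e then g S else 0)"
    by (intro sum.cong refl) (auto simp: Lfun_eq)
  also have "\<dots> = (if monomial n e then (\<Sum>S\<in>{S\<in>Pow {1..<n}. S \<subseteq> ascent_set n e}. g S) else 0)"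
    by (simp add: sum.inter_filter[symmetric])
  also have "{S\<in>Pow {1..<n}. S \<subseteq> ascent_set n e} = Pow (ascent_set n e)"
    by (auto simp: ascent_set_def)
  finally show ?thesis .
qed

lemma sum_count_list:
  assumes "finite A"
  shows "(\<Sum>l\<in>A. count_list xs l) = length (filter (\<lambda>x. x \<in> A) xs)"
proof (induct xs)
  case (Cons a xs)
  have "(\<Sum>l\<in>A. count_list (a # xs) l) = (\<Sum>l\<in>A. count_list xs l + (if a = l then 1 else 0))"
    by (rule sum.cong) auto
  also have "\<dots> = (\<Sum>l\<in>A. count_list xs l) + (if a \<in> A then 1 else 0)"
    using assms by (simp add: sum.distrib)
  finally show ?case
    using Cons by simp
qed simp

lemma partial_sum_eq_card:
  assumes i: "content_word n e i"
  shows "partial_sum e j = card {q. q < n \<and> i ! q \<le> j}"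
proof -
  have "partial_sum e j = length (filter (\<lambda>x. x \<in> {1..j}) i)"
    using i sum_count_list[of "{1..j}" i] by (simp add: partial_sum_def content_word_def)
  also have "\<dots> = card {q. q < length i \<and> i ! q \<in> {1..j}}"
    by (rule length_filter_conv_card)
  also have "{q. q < length i \<and> i ! q \<in> {1..j}} = {q. q < n \<and> i ! q \<le> j}"
    using i by (auto simp: content_word_def)
  finally show ?thesis .
qed

lemma card_sorted_le_ascent:
  assumes i: "sorted i" "length i = n" and p: "0 < p" "p < n" and asc: "i ! (p - 1) < i ! p"
  shows "card {q. q < n \<and> i ! q \<le> i ! (p - 1)} = p"
proof -
  have "{q. q < n \<and> i ! q \<le> i ! (p - 1)} = {..<p}"
  proof (intro set_eqI iffI)
    fix q assume q: "q \<in> {q. q < n \<and> i ! q \<le> i ! (p - 1)}"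
    show "q \<in> {..<p}"
    proof (rule ccontr)
      assume "q \<notin> {..<p}"
      then have "i ! p \<le> i ! q"
        using i q by (intro sorted_nth_mono) auto
      then show False
        using q asc by auto
    qed
  next
    fix q assume "q \<in> {..<p}"
    then show "q \<in> {q. q < n \<and> i ! q \<le> i ! (p - 1)}"
      using i p by (auto intro: sorted_nth_mono)
  qed
  then show ?thesis by simp
qed

lemma card_sorted_le_imp_ascent:
  assumes i: "sorted i" "length i = n" and p: "0 < p" "p < n"
    and card: "card {q. q < n \<and> i ! q \<le> j} = p"
  shows "i ! (p - 1) \<le> j" "j < i ! p"
proof -
  have "{q. q < n \<and> i ! q \<le> j} \<subseteq> {..<p - 1}" if "\<not> i ! (p - 1) \<le> j"
  proof
    fix q assume q: "q \<in> {q. q < n \<and> i ! q \<le> j}"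
    show "q \<in> {..<p - 1}"
    proof (rule ccontr)
      assume "q \<notin> {..<p - 1}"
      then have "i ! (p - 1) \<le> i ! q"
        using i q by (intro sorted_nth_mono) auto
      then show False
        using q that by auto
    qed
  qed
  then show "i ! (p - 1) \<le> j"
    using card_mono[of "{..<p - 1}" "{q. q < n \<and> i ! q \<le> j}"] card p by fastforce
  have "{..p} \<subseteq> {q. q < n \<and> i ! q \<le> j}" if "i ! p \<le> j"
    using i p that by (auto intro: order.trans[OF sorted_nth_mono])
  then show "j < i ! p"
    using card_mono[of "{q. q < n \<and> i ! q \<le> j}" "{..p}"] card by fastforce
qed

lemma ascent_set_eq_partial_sums:
  assumes i: "content_word n e i" and bound: "\<forall>x\<in>set i. x \<le> k"
  shows "ascent_set n e = {p. \<exists>j\<le>k. p = partial_sum e j \<and> 0 < p \<and> p < n}"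
proof (intro set_eqI iffI)
  have word: "content_word_of n e = i"
    using content_word_of_eq[OF i] .
  have si: "sorted i" "length i = n"
    using i by (auto simp: content_word_def)
  fix p
  assume "p \<in> ascent_set n e"
  then have p: "0 < p" "p < n" "i ! (p - 1) < i ! p"
    using word by (auto simp: ascent_set_def)
  have "i ! (p - 1) \<le> k"
    using bound p si by auto
  moreover have "partial_sum e (i ! (p - 1)) = p"
    using partial_sum_eq_card[OF i] card_sorted_le_ascent[OF si p] by simp
  ultimately show "p \<in> {p. \<exists>j\<le>k. p = partial_sum e j \<and> 0 < p \<and> p < n}"
    using p by auto
next
  have word: "content_word_of n e = i"
    using content_word_of_eq[OF i] .
  have si: "sorted i" "length i = n"
    using i by (auto simp: content_word_def)
  fix p
  assume "p \<in> {p. \<exists>j\<le>k. p = partial_sum e j \<and> 0 < p \<and> p < n}"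
  then obtain j where j: "p = partial_sum e j" "0 < p" "p < n"
    by auto
  then have "card {q. q < n \<and> i ! q \<le> j} = p"
    using partial_sum_eq_card[OF i] by simp
  then have "i ! (p - 1) \<le> j" "j < i ! p"
    using card_sorted_le_imp_ascent[OF si j(2,3)] by blast+
  then have "i ! (p - 1) < i ! p"
    by simp
  then show "p \<in> ascent_set n e"
    using j word by (auto simp: ascent_set_def)
qed

definition increasing_word :: "(nat \<Rightarrow> nat) \<Rightarrow> nat \<Rightarrow> nat list" where
  "increasing_word f k = concat (map (\<lambda>l. replicate (f l) l) [1..<Suc k])"

lemma count_list_replicate: "count_list (replicate m x) y = (if x = y then m else 0)"
  by (induct m) auto

lemma count_list_increasing_word:
  "count_list (increasing_word f k) x = (if 1 \<le> x \<and> x \<le> k then f x else 0)"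
  unfolding increasing_word_def by (induct k) (auto simp: count_list_replicate)

lemma set_increasing_word: "set (increasing_word f k) \<subseteq> {1..k}"
  unfolding increasing_word_def by (induct k) auto

lemma length_increasing_word: "length (increasing_word f k) = partial_sum f k"
  unfolding increasing_word_def partial_sum_def by (induct k) auto

lemma sorted_increasing_word: "sorted (increasing_word f k)"
proof (induct k)
  case (Suc k)
  have "\<forall>x\<in>set (increasing_word f k). x \<le> Suc k"
    using set_increasing_word[of f k] by auto
  then show ?case
    using Suc by (auto simp: increasing_word_def sorted_append)
qed (simp add: increasing_word_def)

lemma content_word_increasing_word:
  assumes "e 0 = 0" "\<forall>j>k. e j = 0" "partial_sum e k = n"
  shows "content_word n e (increasing_word e k)"
proof -
  have "increasing_word e k ! j \<in> {1..k}" if "j < n" for j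
    using that assms(3) set_increasing_word[of e k] length_increasing_word[of e k]
    by (metis nth_mem subsetD)
  moreover have "count_list (increasing_word e k) x = e x" for x
    using count_list_increasing_word[of e k x] assms(1,2) by (cases "x = 0") auto
  ultimately show ?thesis
    using assms(3) length_increasing_word[of e k] sorted_increasing_word[of e k]
    by (auto simp: content_word_def)
qed

lemma ex_ascent_set:
  assumes T: "T \<subseteq> {1..<n}"
  shows "\<exists>e. monomial n e \<and> ascent_set n e = T"
proof -
  define i where "i = map (\<lambda>p. Suc (card {t\<in>T. t \<le> p})) [0..<n]"
  define e where "e = count_list i"
  have finT: "finite T"
    using T by (rule finite_subset) simp
  have mono: "card {t\<in>T. t \<le> p} \<le> card {t\<in>T. t \<le> q}" if "p \<le> q" for p q
    using that finT by (intro card_mono) auto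
  have i: "content_word n e i"
    unfolding content_word_def
    by (auto simp: i_def e_def sorted_iff_nth_mono intro: mono)
  have ascent: "card {t\<in>T. t \<le> p - 1} < card {t\<in>T. t \<le> p} \<longleftrightarrow> p \<in> T"
    if "1 \<le> p" for p
  proof -
    have "{t\<in>T. t \<le> p} = (if p \<in> T then insert p else id) {t\<in>T. t \<le> p - 1}"
      using that by (auto simp: le_diff_conv2 order.order_iff_strict)
    moreover have "p \<notin> {t\<in>T. t \<le> p - 1}"
      using that by auto
    ultimately show ?thesis
      using finT by simp
  qed
  have "p \<in> ascent_set n e \<longleftrightarrow> p \<in> T" for p
  proof (cases "1 \<le> p \<and> p < n")
    case True
    then have "p - 1 < n" "p < n"
      by auto
    then have "i ! (p - 1) = Suc (card {t\<in>T. t \<le> p - 1})" "i ! p = Suc (card {t\<in>T. t \<le> p})"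
      unfolding i_def by (simp_all del: upt_Suc)
    then show ?thesis
      using True ascent[of p] by (simp add: ascent_set_def content_word_of_eq[OF i])
  next
    case False
    then show ?thesis
      using T by (auto simp: ascent_set_def)
  qed
  then show ?thesis
    using i by (auto simp: monomial_def)
qed

lemma content_word_max_letter:
  assumes i: "content_word n e i" and n: "1 \<le> n"
  defines "K \<equiv> Max (set i)"
  shows "1 \<le> K" "e 0 = 0" "\<forall>j>K. e j = 0" "\<forall>x\<in>set i. x \<le> K"
    "partial_sum e K = n" "partial_sum e (K - 1) < n" "partial_sum e j \<le> n"
proof -
  have i': "length i = n" "\<forall>j<n. 1 \<le> i ! j" "\<forall>k. count_list i k = e k"
    using i by (auto simp: content_word_def)
  have "i \<noteq> []"
    using i' n by auto
  then have "K \<in> set i"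
    unfolding K_def by (intro Max_in) auto
  then obtain q where q: "q < n" "i ! q = K"
    using i'(1) by (auto simp: in_set_conv_nth)
  show "\<forall>x\<in>set i. x \<le> K"
    by (simp add: K_def)
  have positive: "1 \<le> x" if "x \<in> set i" for x
    using that i' by (auto simp: in_set_conv_nth)
  show "1 \<le> K"
    using positive \<open>K \<in> set i\<close> .
  show "e 0 = 0"
    using positive[of 0] i'(3)[rule_format, of 0] count_list_0_iff[of i 0] by auto
  show "\<forall>j>K. e j = 0"
  proof (intro allI impI)
    fix j assume "K < j"
    then have "j \<notin> set i"
      using \<open>\<forall>x\<in>set i. x \<le> K\<close> by auto
    then show "e j = 0"
      using i'(3)[rule_format, of j] count_list_0_iff[of i j] by auto
  qed
  have "{q. q < n \<and> i ! q \<le> K} = {..<n}"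
    using \<open>\<forall>x\<in>set i. x \<le> K\<close> i'(1) nth_mem[of _ i] by auto
  then show "partial_sum e K = n"
    by (simp add: partial_sum_eq_card[OF i])
  have "q \<notin> {q. q < n \<and> i ! q \<le> K - 1}"
    using q \<open>1 \<le> K\<close> by simp
  then have "{q. q < n \<and> i ! q \<le> K - 1} \<subset> {..<n}"
    using q(1) by blast
  then show "partial_sum e (K - 1) < n"
    using psubset_card_mono[of "{..<n}"] by (simp add: partial_sum_eq_card[OF i])
  have "{q. q < n \<and> i ! q \<le> j} \<subseteq> {..<n}"
    by auto
  then show "partial_sum e j \<le> n"
    using card_mono[of "{..<n}"] by (simp add: partial_sum_eq_card[OF i])
qed

section \<open>Coefficients in the bases \<open>L\<^sub>S\<close> and \<open>\<chi>\<^sub>S\<close>\<close>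

lemma zero_if_subset_sums_zero:
  assumes A: "finite A" and sums: "\<forall>T\<subseteq>A. (\<Sum>S\<in>Pow T. g S) = (0::int)" and T: "T \<subseteq> A"
  shows "g T = 0"
  using T
proof (induction "card T" arbitrary: T rule: less_induct)
  case less
  have finT: "finite T"
    using less.prems A by (rule finite_subset)
  have "g S = 0" if "S \<in> Pow T - {T}" for S
  proof -
    have "card S < card T"
      using that finT by (intro psubset_card_mono) auto
    then show ?thesis
      using less.hyps that less.prems by auto
  qed
  then have "(\<Sum>S\<in>Pow T - {T}. g S) = 0"
    by (intro sum.neutral) blast
  moreover have "(\<Sum>S\<in>Pow T. g S) = g T + (\<Sum>S\<in>Pow T - {T}. g S)"
    using finT by (simp add: sum.remove[of "Pow T" T])
  ultimately show ?case
    using sums less.prems by simp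
qed

lemma zero_if_superset_sums_zero:
  assumes A: "finite A" and sums: "\<forall>T\<subseteq>A. (\<Sum>S\<in>{S\<in>Pow A. T \<subseteq> S}. g S) = (0::int)"
    and T: "T \<subseteq> A"
  shows "g T = 0"
  using T
proof (induction "card (A - T)" arbitrary: T rule: less_induct)
  case less
  have "g S = 0" if S: "S \<in> {S\<in>Pow A. T \<subset> S}" for S
  proof -
    have "A - S \<subset> A - T"
      using S by blast
    then have "card (A - S) < card (A - T)"
      using A by (intro psubset_card_mono) auto
    then show ?thesis
      using less.hyps S by blast
  qed
  then have "(\<Sum>S\<in>{S\<in>Pow A. T \<subset> S}. g S) = 0"
    by (intro sum.neutral) blast
  moreover have "{S\<in>Pow A. T \<subseteq> S} = insert T {S\<in>Pow A. T \<subset> S}"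
    using less.prems by auto
  then have "(\<Sum>S\<in>{S\<in>Pow A. T \<subseteq> S}. g S) = g T + (\<Sum>S\<in>{S\<in>Pow A. T \<subset> S}. g S)"
    using A by simp
  ultimately show ?case
    using sums less.prems by simp
qed

lemma ex_subset_sum_inverse:
  "finite A \<Longrightarrow> \<exists>d. \<forall>U\<subseteq>A. f U = (\<Sum>S\<in>Pow U. d S :: int)"
proof (induction A arbitrary: f rule: finite_induct)
  case empty
  show ?case
    by (rule exI[of _ "\<lambda>_. f {}"]) auto
next
  case (insert a A)
  obtain d1 where d1: "\<forall>U\<subseteq>A. f U = (\<Sum>S\<in>Pow U. d1 S)"
    using insert.IH by blast
  obtain d2 where d2: "\<forall>U\<subseteq>A. f (insert a U) - f U = (\<Sum>S\<in>Pow U. d2 S)"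
    using insert.IH[of "\<lambda>U. f (insert a U) - f U"] by blast
  define d where "d S = (if a \<in> S then d2 (S - {a}) else d1 S)" for S
  have "f U = (\<Sum>S\<in>Pow U. d S)" if U: "U \<subseteq> insert a A" for U
  proof (cases "a \<in> U")
    case False
    then have "(\<Sum>S\<in>Pow U. d S) = (\<Sum>S\<in>Pow U. d1 S)"
      by (intro sum.cong) (auto simp: d_def)
    moreover have "U \<subseteq> A"
      using U False by auto
    ultimately show ?thesis
      using d1 by simp
  next
    case True
    define U' where "U' = U - {a}"
    have U': "U' \<subseteq> A" "a \<notin> U'" "U = insert a U'"
      using U True by (auto simp: U'_def)
    have "finite U'"
      using U'(1) insert.hyps(1) by (rule finite_subset)
    have inj: "inj_on (insert a) (Pow U')"
      using U'(2) by (auto simp: inj_on_def)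
    have "(\<Sum>S\<in>Pow U. d S) = (\<Sum>S\<in>Pow U'. d S) + (\<Sum>S\<in>insert a ` Pow U'. d S)"
      unfolding U'(3) Pow_insert using U'(2) \<open>finite U'\<close> by (intro sum.union_disjoint) auto
    also have "(\<Sum>S\<in>Pow U'. d S) = (\<Sum>S\<in>Pow U'. d1 S)"
      using U'(2) by (intro sum.cong) (auto simp: d_def)
    also have "(\<Sum>S\<in>insert a ` Pow U'. d S) = (\<Sum>S\<in>Pow U'. d (insert a S))"
      using inj by (simp add: sum.reindex)
    also have "\<dots> = (\<Sum>S\<in>Pow U'. d2 S)"
    proof (intro sum.cong refl)
      fix S assume "S \<in> Pow U'"
      then have "insert a S - {a} = S"
        using U'(2) by auto
      then show "d (insert a S) = d2 S"
        by (simp add: d_def)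
    qed
    moreover have "f U' = (\<Sum>S\<in>Pow U'. d1 S)" "f (insert a U') - f U' = (\<Sum>S\<in>Pow U'. d2 S)"
      using d1 d2 U'(1) by blast+
    ultimately show ?thesis
      using U'(3) by simp
  qed
  then show ?case
    by blast
qed

lemma Lfun_coeffs_unique:
  assumes eq: "\<forall>e. (\<Sum>S\<in>Pow {1..<n}. a S * Lfun S n e) = (\<Sum>S\<in>Pow {1..<n}. b S * Lfun S n e)"
    and S: "S \<subseteq> {1..<n}"
  shows "a S = (b S :: int)"
proof -
  have "\<forall>T\<subseteq>{1..<n}. (\<Sum>U\<in>Pow T. a U - b U) = 0"
  proof (intro allI impI)
    fix T assume "T \<subseteq> {1..<n}"
    then obtain e where "monomial n e" "ascent_set n e = T"
      using ex_ascent_set by blast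
    then have "(\<Sum>U\<in>Pow T. a U) = (\<Sum>U\<in>Pow T. b U)"
      using eq[rule_format, of e] sum_Lfun[of a n e] sum_Lfun[of b n e] by simp
    then show "(\<Sum>U\<in>Pow T. a U - b U) = 0"
      by (simp add: sum_subtractf)
  qed
  then show ?thesis
    using zero_if_subset_sums_zero[of "{1..<n}" "\<lambda>U. a U - b U" S] S by simp
qed

lemma chiS_eq:
  assumes "set w \<subseteq> {1..<n}"
  shows "chiS n S w = (if set w \<subseteq> S then (-1) ^ length w else 0)"
proof -
  have "(\<Prod>i\<leftarrow>w. if i \<in> S then -1 else (0::int)) = (if set w \<subseteq> S then (-1) ^ length w else 0)"
    by (induct w) auto
  then show ?thesis
    using assms by (simp add: chiS_def)
qed

lemma sum_chiS:
  assumes w: "set w \<subseteq> {1..<n}"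
  shows "(\<Sum>S\<in>Pow {1..<n}. c S * chiS n S w)
    = (-1) ^ length w * (\<Sum>S\<in>{S\<in>Pow {1..<n}. set w \<subseteq> S}. c S)"
proof -
  have "(\<Sum>S\<in>Pow {1..<n}. c S * chiS n S w)
      = (\<Sum>S\<in>Pow {1..<n}. if set w \<subseteq> S then (-1) ^ length w * c S else 0)"
    using w by (intro sum.cong refl) (simp add: chiS_eq)
  then show ?thesis
    by (simp add: sum.inter_filter[symmetric] sum_distrib_left)
qed

lemma chiS_coeffs_unique:
  assumes eq: "\<forall>w. (\<Sum>S\<in>Pow {1..<n}. a S * chiS n S w) = (\<Sum>S\<in>Pow {1..<n}. b S * chiS n S w)"
    and S: "S \<subseteq> {1..<n}"
  shows "a S = (b S :: int)"
proof -
  have "\<forall>T\<subseteq>{1..<n}. (\<Sum>U\<in>{U\<in>Pow {1..<n}. T \<subseteq> U}. a U - b U) = 0"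
  proof (intro allI impI)
    fix T assume T: "T \<subseteq> {1..<n}"
    define w where "w = sorted_list_of_set T"
    have "set w = T"
      using T by (simp add: w_def finite_subset)
    then have "(\<Sum>U\<in>{U\<in>Pow {1..<n}. T \<subseteq> U}. a U) = (\<Sum>U\<in>{U\<in>Pow {1..<n}. T \<subseteq> U}. b U)"
      using eq[rule_format, of w] sum_chiS[of w n a] sum_chiS[of w n b] T by simp
    then show "(\<Sum>U\<in>{U\<in>Pow {1..<n}. T \<subseteq> U}. a U - b U) = 0"
      by (simp add: sum_subtractf)
  qed
  then show ?thesis
    using zero_if_superset_sums_zero[of "{1..<n}" "\<lambda>U. a U - b U" S] S by simp
qed

lemma omega_eq:
  assumes "F = (\<lambda>e. \<Sum>S\<in>Pow {1..<n}. d S * Lfun S n e)"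
  shows "omega n F = (\<lambda>e. \<Sum>S\<in>Pow {1..<n}. d S * Lfun ({1..<n} - S) n e)"
  unfolding omega_def
proof (rule the_equality)
  fix G assume "\<exists>d'. F = (\<lambda>e. \<Sum>S\<in>Pow {1..<n}. d' S * Lfun S n e) \<and>
      G = (\<lambda>e. \<Sum>S\<in>Pow {1..<n}. d' S * Lfun ({1..<n} - S) n e)"
  then obtain d' where d': "F = (\<lambda>e. \<Sum>S\<in>Pow {1..<n}. d' S * Lfun S n e)"
    "G = (\<lambda>e. \<Sum>S\<in>Pow {1..<n}. d' S * Lfun ({1..<n} - S) n e)"
    by blast
  have "\<forall>e. (\<Sum>S\<in>Pow {1..<n}. d' S * Lfun S n e) = (\<Sum>S\<in>Pow {1..<n}. d S * Lfun S n e)"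
    using fun_cong[OF trans[OF d'(1)[symmetric] assms]] by simp
  then have "d' S = d S" if "S \<in> Pow {1..<n}" for S
    using Lfun_coeffs_unique that by blast
  then show "G = (\<lambda>e. \<Sum>S\<in>Pow {1..<n}. d S * Lfun ({1..<n} - S) n e)"
    using d'(2) by (auto simp: fun_eq_iff intro: sum.cong)
qed (use assms in blast)

lemma ch_eq:
  assumes "\<chi> = (\<lambda>w. \<Sum>S\<in>Pow {1..<n}. c S * chiS n S w)"
  shows "ch n \<chi> = (\<lambda>e. \<Sum>S\<in>Pow {1..<n}. c S * Lfun S n e)"
  unfolding ch_def
proof (rule the_equality)
  fix G assume "\<exists>c'. \<chi> = (\<lambda>w. \<Sum>S\<in>Pow {1..<n}. c' S * chiS n S w) \<and>
      G = (\<lambda>e. \<Sum>S\<in>Pow {1..<n}. c' S * Lfun S n e)"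
  then obtain c' where c': "\<chi> = (\<lambda>w. \<Sum>S\<in>Pow {1..<n}. c' S * chiS n S w)"
    "G = (\<lambda>e. \<Sum>S\<in>Pow {1..<n}. c' S * Lfun S n e)"
    by blast
  have "\<forall>w. (\<Sum>S\<in>Pow {1..<n}. c' S * chiS n S w) = (\<Sum>S\<in>Pow {1..<n}. c S * chiS n S w)"
    using fun_cong[OF trans[OF c'(1)[symmetric] assms]] by simp
  then have "c' S = c S" if "S \<in> Pow {1..<n}" for S
    using chiS_coeffs_unique that by blast
  then show "G = (\<lambda>e. \<Sum>S\<in>Pow {1..<n}. c S * Lfun S n e)"
    using c'(2) by (auto simp: fun_eq_iff intro: sum.cong)
qed (use assms in blast)

lemma sum_card_fibres:
  assumes "finite M" "finite A" "\<forall>m\<in>M. g m \<in> A"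
  shows "(\<Sum>S\<in>{S\<in>A. Q S}. card {m\<in>M. g m = S}) = card {m\<in>M. Q (g m)}"
proof -
  have "(\<Sum>S\<in>{S\<in>A. Q S}. \<Sum>m | m \<in> {m\<in>M. Q (g m)} \<and> g m = S. 1::nat)
      = (\<Sum>m\<in>{m\<in>M. Q (g m)}. 1)"
    using assms by (intro sum.group) auto
  moreover have "{m. m \<in> {m\<in>M. Q (g m)} \<and> g m = S} = {m\<in>M. g m = S}" if "Q S" for S
    using that by auto
  ultimately show ?thesis
    by (metis (no_types, lifting) card_eq_sum mem_Collect_eq sum.cong)
qed

section \<open>Graded posets and the multichain series \<open>F\<^sub>P\<close>\<close>

locale graded_poset =
  fixes P :: "'a::order set" and n :: nat and bt tp :: 'a
  assumes graded: "graded_bounded P n bt tp"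
begin

lemma finite_P: "finite P"
  and bt_in: "bt \<in> P"
  and tp_in: "tp \<in> P"
  and bounded: "x \<in> P \<Longrightarrow> bt \<le> x \<and> x \<le> tp"
  and card_MC: "M \<in> MC P \<Longrightarrow> card M = n + 1"
  using graded by (auto simp: graded_bounded_def)

lemma finite_chain: "is_chain P C \<Longrightarrow> finite C"
  using finite_P by (auto simp: is_chain_def intro: finite_subset)

lemma finite_MC: "finite (MC P)"
proof -
  have "MC P \<subseteq> Pow P"
    by (auto simp: MC_def maximal_chain_def is_chain_def)
  then show ?thesis
    using finite_P by (meson finite_Pow_iff finite_subset)
qed

lemma chain_extends_to_MC:
  assumes C: "is_chain P C"
  obtains M where "M \<in> MC P" "C \<subseteq> M"
proof -
  define Ch where "Ch = {D. is_chain P D \<and> C \<subseteq> D}"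
  have "Ch \<subseteq> Pow P"
    by (auto simp: Ch_def is_chain_def)
  then have fin: "finite Ch"
    using finite_P by (meson finite_Pow_iff finite_subset)
  have "Max (card ` Ch) \<in> card ` Ch"
    using fin C by (intro Max_in) (auto simp: Ch_def)
  then obtain D where "D \<in> Ch" "card D = Max (card ` Ch)"
    by auto
  then have D: "D \<in> Ch" "\<forall>D'\<in>Ch. card D' \<le> card D"
    using fin by simp_all
  have "maximal_chain P D"
    unfolding maximal_chain_def
  proof (intro conjI allI impI)
    show "is_chain P D"
      using D by (simp add: Ch_def)
    fix D' assume D': "is_chain P D' \<and> D \<subseteq> D'"
    then have "D' \<in> Ch"
      using D by (auto simp: Ch_def)
    have "finite D'"
      using D' finite_chain by blast
    then show "D' = D"
      using card_seteq[of D' D] D D' \<open>D' \<in> Ch\<close> by auto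
  qed
  then show thesis
    using D that by (auto simp: MC_def Ch_def)
qed

definition chain_sizes_below :: "'a \<Rightarrow> nat set" where
  "chain_sizes_below x = {card C |C. is_chain P C \<and> (\<forall>y\<in>C. y \<le> x)}"

lemma rk_eq: "rk P x = Max (chain_sizes_below x) - 1"
  by (simp add: rk_def chain_sizes_below_def)

lemma finite_chain_sizes_below: "finite (chain_sizes_below x)"
proof -
  have "chain_sizes_below x \<subseteq> card ` Pow P"
    by (auto simp: chain_sizes_below_def is_chain_def)
  then show ?thesis
    using finite_P by (meson finite_Pow_iff finite_imageI finite_subset)
qed

lemma one_in_chain_sizes_below: "x \<in> P \<Longrightarrow> 1 \<in> chain_sizes_below x"
  unfolding chain_sizes_below_def
  by (rule CollectI, rule exI[of _ "{x}"]) (simp add: is_chain_def)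

lemma rk_strict_mono:
  assumes "x \<in> P" "y \<in> P" "x < y"
  shows "rk P x < rk P y"
proof -
  have "Max (chain_sizes_below x) \<in> chain_sizes_below x"
    using finite_chain_sizes_below one_in_chain_sizes_below[OF assms(1)] by (intro Max_in) auto
  then obtain C where C: "is_chain P C" "\<forall>z\<in>C. z \<le> x" "card C = Max (chain_sizes_below x)"
    unfolding chain_sizes_below_def by auto
  have "y \<notin> C"
    using C assms by force
  have "is_chain P (insert y C)" "\<forall>z\<in>insert y C. z \<le> y"
    using C assms unfolding is_chain_def by (auto intro: order.trans order.strict_implies_order)
  then have "card (insert y C) \<le> Max (chain_sizes_below y)"
    using finite_chain_sizes_below by (intro Max_ge) (auto simp: chain_sizes_below_def)
  moreover have "card (insert y C) = Suc (card C)"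
    using \<open>y \<notin> C\<close> finite_chain[OF C(1)] by simp
  moreover have "1 \<le> Max (chain_sizes_below x)"
    using one_in_chain_sizes_below[OF assms(1)] finite_chain_sizes_below by (simp add: Max_ge)
  ultimately show ?thesis
    using C by (simp add: rk_eq)
qed

lemma rk_bt: "rk P bt = 0"
proof -
  have "k \<le> 1" if k: "k \<in> chain_sizes_below bt" for k
  proof -
    obtain C where C: "is_chain P C" "\<forall>y\<in>C. y \<le> bt" "k = card C"
      using k unfolding chain_sizes_below_def by blast
    have "C \<subseteq> {bt}"
    proof
      fix y assume "y \<in> C"
      then have "y \<in> P" "y \<le> bt"
        using C by (auto simp: is_chain_def)
      then show "y \<in> {bt}"
        using bounded[of y] by (simp add: order.antisym)
    qed
    then show "k \<le> 1"
      using C card_mono[of "{bt}" C] by simp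
  qed
  then have "Max (chain_sizes_below bt) = 1"
    using finite_chain_sizes_below one_in_chain_sizes_below[OF bt_in] by (intro Max_eqI) auto
  then show ?thesis
    by (simp add: rk_eq)
qed

lemma rk_tp: "rk P tp = n"
proof -
  have "k \<le> n + 1" if k: "k \<in> chain_sizes_below tp" for k
  proof -
    obtain C where C: "is_chain P C" "k = card C"
      using k unfolding chain_sizes_below_def by blast
    obtain M where M: "M \<in> MC P" "C \<subseteq> M"
      using chain_extends_to_MC[OF C(1)] .
    then have "card C \<le> card M"
      using finite_chain by (intro card_mono) (auto simp: MC_def maximal_chain_def)
    then show "k \<le> n + 1"
      using C M card_MC by simp
  qed
  moreover have "n + 1 \<in> chain_sizes_below tp"
  proof -
    obtain M where M: "M \<in> MC P"
      using chain_extends_to_MC[of "{}"] by (auto simp: is_chain_def)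
    then have "is_chain P M" "\<forall>y\<in>M. y \<le> tp"
      using bounded by (auto simp: MC_def maximal_chain_def is_chain_def)
    then show ?thesis
      using card_MC[OF M] unfolding chain_sizes_below_def by force
  qed
  ultimately have "Max (chain_sizes_below tp) = n + 1"
    using finite_chain_sizes_below by (intro Max_eqI) auto
  then show ?thesis
    by (simp add: rk_eq)
qed

lemma rk_le_imp_le:
  "x \<in> P \<Longrightarrow> y \<in> P \<Longrightarrow> x \<le> y \<or> y \<le> x \<Longrightarrow> rk P x \<le> rk P y \<Longrightarrow> x \<le> y"
  using rk_strict_mono[of y x] by (auto simp: order.order_iff_strict)

lemma rk_inj_comparable:
  "x \<in> P \<Longrightarrow> y \<in> P \<Longrightarrow> x \<le> y \<or> y \<le> x \<Longrightarrow> rk P x = rk P y \<Longrightarrow> x = y"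
  using rk_le_imp_le[of x y] rk_le_imp_le[of y x] by (auto intro: order.antisym)

lemma inj_on_rk_chain: "is_chain P C \<Longrightarrow> inj_on (rk P) C"
  unfolding inj_on_def is_chain_def by (meson rk_inj_comparable subsetD)

lemma rk_pos_iff: "x \<in> P \<Longrightarrow> 0 < rk P x \<longleftrightarrow> bt < x"
  using rk_strict_mono[of bt x] bt_in bounded[of x] rk_bt by (auto simp: order.order_iff_strict)

lemma rk_less_n_iff: "x \<in> P \<Longrightarrow> rk P x < n \<longleftrightarrow> x < tp"
  using rk_strict_mono[of x tp] tp_in bounded[of x] rk_tp by (auto simp: order.order_iff_strict)

definition multichain :: "(nat \<Rightarrow> nat) \<Rightarrow> 'a list \<Rightarrow> nat \<Rightarrow> bool" where
  "multichain e ts k \<longleftrightarrow> length ts = k + 1 \<and> set ts \<subseteq> P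
     \<and> ts ! 0 = bt \<and> ts ! k = tp
     \<and> (\<forall>j. j + 1 < k \<longrightarrow> ts ! j \<le> ts ! (j + 1)) \<and> ts ! (k - 1) < ts ! k
     \<and> e 0 = 0 \<and> (\<forall>j\<in>{1..k}. e j = rk P (ts ! j) - rk P (ts ! (j - 1)))
     \<and> (\<forall>j>k. e j = 0)"

lemma FP_eq_card_multichains: "FP P bt tp e = int (card {ts. \<exists>k\<ge>1. multichain e ts k})"
  unfolding FP_def multichain_def ..

context
  fixes e ts k
  assumes mc: "multichain e ts k"
begin

lemma multichain_length: "length ts = k + 1"
  and multichain_bt: "ts ! 0 = bt"
  and multichain_tp: "ts ! k = tp"
  and multichain_last: "ts ! (k - 1) < ts ! k"
  and multichain_e0: "e 0 = 0"
  and multichain_jump: "j \<in> {1..k} \<Longrightarrow> e j = rk P (ts ! j) - rk P (ts ! (j - 1))"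
  and multichain_support: "k < j \<Longrightarrow> e j = 0"
  using mc by (auto simp: multichain_def)

lemma multichain_in_P: "j \<le> k \<Longrightarrow> ts ! j \<in> P"
proof -
  assume "j \<le> k"
  then have "ts ! j \<in> set ts"
    using multichain_length by simp
  moreover have "set ts \<subseteq> P"
    using mc by (simp add: multichain_def)
  ultimately show ?thesis
    by blast
qed

lemma multichain_step: "1 \<le> j \<Longrightarrow> j \<le> k \<Longrightarrow> ts ! (j - 1) \<le> ts ! j"
proof (cases "j = k")
  case False
  assume "1 \<le> j" "j \<le> k"
  then have "(j - 1) + 1 < k"
    using False by auto
  then have "ts ! (j - 1) \<le> ts ! ((j - 1) + 1)"
    using mc by (simp add: multichain_def)
  then show ?thesis
    using \<open>1 \<le> j\<close> by simp
qed (use multichain_last in simp)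

lemma multichain_mono: "i \<le> j \<Longrightarrow> j \<le> k \<Longrightarrow> ts ! i \<le> ts ! j"
proof (induction j)
  case (Suc j)
  then show ?case
    using multichain_step[of "Suc j"] by (cases "i = Suc j") (auto intro: order.trans)
qed simp

lemma multichain_comparable: "x \<in> set ts \<Longrightarrow> y \<in> set ts \<Longrightarrow> x \<le> y \<or> y \<le> x"
proof -
  assume "x \<in> set ts" "y \<in> set ts"
  then obtain a b where "a < length ts" "b < length ts" "x = ts ! a" "y = ts ! b"
    by (auto simp: in_set_conv_nth)
  moreover have "length ts = Suc k"
    using multichain_length by simp
  ultimately have "a \<le> k" "b \<le> k" "x = ts ! a" "y = ts ! b"
    by auto
  then show ?thesis
    using multichain_mono[of a b] multichain_mono[of b a] by (cases "a \<le> b") auto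
qed

lemma rk_multichain: "j \<le> k \<Longrightarrow> rk P (ts ! j) = partial_sum e j"
proof (induction j)
  case 0
  then show ?case
    using rk_bt multichain_bt by simp
next
  case (Suc j)
  have "rk P (ts ! j) \<le> rk P (ts ! Suc j)"
  proof (cases "ts ! j = ts ! Suc j")
    case False
    then have "ts ! j < ts ! Suc j"
      using multichain_step[of "Suc j"] Suc.prems by simp
    then show ?thesis
      using multichain_in_P[of j] multichain_in_P[of "Suc j"] Suc.prems rk_strict_mono
      by (simp add: less_imp_le)
  qed simp
  then show ?case
    using Suc multichain_jump[of "Suc j"] by (simp add: partial_sum_Suc)
qed

lemma partial_sum_multichain: "partial_sum e k = n"
  using rk_multichain[of k] rk_tp multichain_tp by simp

lemma multichain_last_jump: "1 \<le> k \<Longrightarrow> 0 < e k"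
proof -
  assume "1 \<le> k"
  have "ts ! (k - 1) \<in> P"
    by (rule multichain_in_P) simp
  then have "rk P (ts ! (k - 1)) < rk P tp"
    using rk_strict_mono tp_in multichain_last multichain_tp by simp
  then show ?thesis
    using multichain_jump[of k] \<open>1 \<le> k\<close> multichain_tp by simp
qed

lemma monomial_multichain: "content_word n e (increasing_word e k)"
  using content_word_increasing_word multichain_e0 multichain_support partial_sum_multichain by blast

lemma content_word_multichain_bound:
  assumes i: "content_word n e i" and x: "x \<in> set i"
  shows "x \<le> k"
proof -
  have "e x \<noteq> 0"
    using i x count_list_0_iff[of i x] by (simp add: content_word_def)
  then show ?thesis
    using multichain_support[of x] by (meson not_le)
qed

end

lemma multichain_length_unique:
  assumes "multichain e ts k" "1 \<le> k" "multichain e ts' k'" "1 \<le> k'"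
  shows "k = k'"
  using multichain_last_jump[OF assms(1,2)] multichain_last_jump[OF assms(3,4)]
    multichain_support[OF assms(1), of k'] multichain_support[OF assms(3), of k]
  by (cases k k' rule: linorder_cases) auto

definition interior :: "'a list \<Rightarrow> 'a set" where
  "interior ts = {x \<in> set ts. bt < x \<and> x < tp}"

definition rank_chains :: "nat set \<Rightarrow> 'a set set" where
  "rank_chains S = {T. is_chain P T \<and> (\<forall>t\<in>T. bt < t \<and> t < tp) \<and> card T = card S \<and> rk P ` T = S}"

lemma flag_f_eq_card_rank_chains: "flag_f P bt tp S = card (rank_chains S)"
  unfolding flag_f_def rank_chains_def ..

lemma rk_interior:
  assumes mc: "multichain e ts k"
  shows "rk P ` interior ts = {p. \<exists>j\<le>k. p = partial_sum e j \<and> 0 < p \<and> p < n}"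
proof (intro set_eqI iffI)
  fix p
  assume "p \<in> rk P ` interior ts"
  then obtain x where x: "x \<in> set ts" "bt < x" "x < tp" "p = rk P x"
    by (auto simp: interior_def)
  then obtain j where "j < length ts" "x = ts ! j"
    by (auto simp: in_set_conv_nth)
  then have j: "j \<le> k" "x = ts ! j"
    using multichain_length[OF mc] by simp_all
  then have "x \<in> P"
    using multichain_in_P[OF mc] by simp
  then have "0 < p" "p < n"
    using rk_pos_iff rk_less_n_iff x by simp_all
  moreover have "p = partial_sum e j"
    using rk_multichain[OF mc j(1)] j x by simp
  ultimately show "p \<in> {p. \<exists>j\<le>k. p = partial_sum e j \<and> 0 < p \<and> p < n}"
    using j(1) by blast
next
  fix p
  assume "p \<in> {p. \<exists>j\<le>k. p = partial_sum e j \<and> 0 < p \<and> p < n}"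
  then obtain j where j: "j \<le> k" "p = partial_sum e j" "0 < p" "p < n"
    by auto
  have in_P: "ts ! j \<in> P" and rk: "rk P (ts ! j) = p"
    using multichain_in_P[OF mc j(1)] rk_multichain[OF mc j(1)] j by simp_all
  then have "bt < ts ! j" "ts ! j < tp"
    using rk_pos_iff[OF in_P] rk_less_n_iff[OF in_P] j by simp_all
  moreover have "ts ! j \<in> set ts"
    using multichain_length[OF mc] j(1) by simp
  ultimately have "ts ! j \<in> interior ts"
    by (simp add: interior_def)
  then show "p \<in> rk P ` interior ts"
    using rk by blast
qed

lemma interior_in_rank_chains:
  assumes mc: "multichain e ts k" and i: "content_word n e i"
  shows "interior ts \<in> rank_chains (ascent_set n e)"
proof -
  have chain: "is_chain P (interior ts)"
    using multichain_comparable[OF mc] multichain_length[OF mc] multichain_in_P[OF mc]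
    by (auto simp: is_chain_def interior_def in_set_conv_nth)
  have "\<forall>x\<in>set i. x \<le> k"
    using content_word_multichain_bound[OF mc i] by blast
  then have ranks: "rk P ` interior ts = ascent_set n e"
    using rk_interior[OF mc] ascent_set_eq_partial_sums[OF i] by simp
  then have "card (interior ts) = card (ascent_set n e)"
    using card_image[OF inj_on_rk_chain[OF chain]] by simp
  then show ?thesis
    using chain ranks by (auto simp: rank_chains_def interior_def)
qed

lemma inj_on_interior: "inj_on interior {ts. \<exists>k\<ge>1. multichain e ts k}"
proof (rule inj_onI)
  fix ts ts'
  assume "ts \<in> {ts. \<exists>k\<ge>1. multichain e ts k}" "ts' \<in> {ts. \<exists>k\<ge>1. multichain e ts k}"
    and eq: "interior ts = interior ts'"
  then obtain k k' where mc: "multichain e ts k" "1 \<le> k" "multichain e ts' k'" "1 \<le> k'"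
    by auto
  have "k' = k"
    using multichain_length_unique[OF mc] by simp
  have in_E: "x \<in> insert bt (insert tp (interior ts))" if "x \<in> set t" "set t \<subseteq> P" "interior t = interior ts" for x t
    using that bounded[of x] by (auto simp: interior_def order.order_iff_strict)
  show "ts = ts'"
  proof (rule nth_equalityI)
    show "length ts = length ts'"
      using multichain_length[OF mc(1)] multichain_length[OF mc(3)] \<open>k' = k\<close> by simp
    fix j assume "j < length ts"
    then have j: "j \<le> k"
      using multichain_length[OF mc(1)] by simp
    have xy: "ts ! j \<in> P" "ts' ! j \<in> P" "rk P (ts ! j) = rk P (ts' ! j)"
      using multichain_in_P[OF mc(1) j] multichain_in_P[OF mc(3)] rk_multichain[OF mc(1) j]
        rk_multichain[OF mc(3)] j \<open>k' = k\<close> by simp_all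
    have "ts ! j \<in> insert bt (insert tp (interior ts))" "ts' ! j \<in> insert bt (insert tp (interior ts))"
      using in_E[of "ts ! j" ts] in_E[of "ts' ! j" ts'] multichain_length[OF mc(1)] multichain_length[OF mc(3)]
        j \<open>k' = k\<close> eq mc(1,3) by (auto simp: multichain_def)
    moreover have "x \<le> y \<or> y \<le> x" if "x \<in> interior ts" "y \<in> interior ts" for x y
      using that multichain_comparable[OF mc(1)] by (auto simp: interior_def)
    ultimately have "ts ! j \<le> ts' ! j \<or> ts' ! j \<le> ts ! j"
      using bounded xy(1,2) by auto
    then show "ts ! j = ts' ! j"
      using rk_inj_comparable xy by blast
  qed
qed

lemma is_chain_insert_bounds: "is_chain P T \<Longrightarrow> is_chain P (insert bt (insert tp T))"
  using bt_in tp_in bounded by (auto simp: is_chain_def)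

text \<open>The \<open>j\<close>-th entry of the multichain is the element of \<open>E\<close> of rank \<open>partial_sum e j\<close>.\<close>

lemma multichain_through_chain:
  assumes E: "is_chain P E" "bt \<in> E" "tp \<in> E"
    and ranks: "\<And>j. j \<le> K \<Longrightarrow> partial_sum e j \<in> rk P ` E"
    and e: "e 0 = 0" "\<forall>j>K. e j = 0" "partial_sum e K = n" "partial_sum e (K - 1) < n"
  obtains ts where "multichain e ts K" "set ts \<subseteq> E"
    "\<And>j x. j \<le> K \<Longrightarrow> x \<in> E \<Longrightarrow> rk P x = partial_sum e j \<Longrightarrow> x \<in> set ts"
proof -
  have inj: "inj_on (rk P) E"
    using inj_on_rk_chain[OF E(1)] .
  define ts where "ts = map (\<lambda>j. the_inv_into E (rk P) (partial_sum e j)) [0..<Suc K]"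
  have len: "length ts = K + 1"
    by (simp add: ts_def)
  have ts_nth: "ts ! j \<in> E" "rk P (ts ! j) = partial_sum e j" if "j \<le> K" for j
  proof -
    have "ts ! j = the_inv_into E (rk P) (partial_sum e j)"
      using that by (simp add: ts_def del: upt_Suc)
    then show "ts ! j \<in> E" "rk P (ts ! j) = partial_sum e j"
      using the_inv_into_into[OF inj ranks[OF that]] f_the_inv_into_f[OF inj ranks[OF that]] by simp_all
  qed
  have ts_eq: "ts ! j = x" if "j \<le> K" "x \<in> E" "rk P x = partial_sum e j" for j x
    using inj_onD[OF inj, of "ts ! j" x] ts_nth[OF that(1)] that(2,3) by simp
  have E_P: "E \<subseteq> P"
    using E by (simp add: is_chain_def)
  have set_ts: "set ts \<subseteq> E"
    using ts_nth len by (auto simp: in_set_conv_nth)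
  have steps: "ts ! j \<le> ts ! (j + 1)" if "j + 1 < K" for j
  proof -
    have "ts ! j \<in> E" "ts ! (j + 1) \<in> E" "rk P (ts ! j) \<le> rk P (ts ! (j + 1))"
      using ts_nth[of j] ts_nth[of "j + 1"] partial_sum_mono[of j "j + 1" e] that by simp_all
    then show ?thesis
      using rk_le_imp_le E(1) E_P unfolding is_chain_def by blast
  qed
  have ends: "ts ! 0 = bt" "ts ! K = tp"
    using ts_eq[of 0 bt] ts_eq[of K tp] rk_bt rk_tp E(2,3) e(3) by simp_all
  have "ts ! (K - 1) \<noteq> tp" "ts ! (K - 1) \<le> tp"
    using ts_nth[of "K - 1"] e(4) rk_tp bounded E_P by auto
  then have last: "ts ! (K - 1) < ts ! K"
    using ends by simp
  have jumps: "e j = rk P (ts ! j) - rk P (ts ! (j - 1))" if "j \<in> {1..K}" for j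
    using that ts_nth[of j] ts_nth[of "j - 1"] partial_sum_Suc[of e "j - 1"] by auto
  have "multichain e ts K"
    unfolding multichain_def using len set_ts E_P ends steps last e(1,2) jumps by blast
  moreover have "x \<in> set ts" if "j \<le> K" "x \<in> E" "rk P x = partial_sum e j" for j x
    using ts_eq[OF that] that(1) len by (metis le_imp_less_Suc nth_mem Suc_eq_plus1)
  ultimately show thesis
    using that set_ts by blast
qed

lemma rank_chain_multichain:
  assumes n: "1 \<le> n" and i: "content_word n e i" and T: "T \<in> rank_chains (ascent_set n e)"
  obtains ts k where "1 \<le> k" "multichain e ts k" "interior ts = T"
proof -
  define K where "K = Max (set i)"
  note word = content_word_max_letter[OF i n, folded K_def]
  note ascent = ascent_set_eq_partial_sums[OF i word(4)]
  have T': "is_chain P T" "\<forall>t\<in>T. bt < t \<and> t < tp" "rk P ` T = ascent_set n e"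
    using T by (auto simp: rank_chains_def)
  define E where "E = insert bt (insert tp T)"
  have E: "is_chain P E" "bt \<in> E" "tp \<in> E"
    unfolding E_def using is_chain_insert_bounds[OF T'(1)] by auto
  have "partial_sum e j \<in> rk P ` E" if "j \<le> K" for j
  proof -
    consider "partial_sum e j = 0" | "partial_sum e j = n" | "0 < partial_sum e j" "partial_sum e j < n"
      using word(7)[of j] by linarith
    then show ?thesis
    proof cases
      case 3
      then have "partial_sum e j \<in> ascent_set n e"
        using ascent that by auto
      then show ?thesis
        using T'(3) by (auto simp: E_def)
    qed (use rk_bt rk_tp in \<open>auto simp: E_def\<close>)
  qed
  then obtain ts where mc: "multichain e ts K" and set_ts: "set ts \<subseteq> E"
    and in_ts: "\<And>j x. j \<le> K \<Longrightarrow> x \<in> E \<Longrightarrow> rk P x = partial_sum e j \<Longrightarrow> x \<in> set ts"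
    using multichain_through_chain[OF E] word(2,3,5,6) by blast
  have "interior ts = T"
  proof (intro set_eqI iffI)
    fix x assume "x \<in> interior ts"
    then show "x \<in> T"
      using set_ts by (auto simp: interior_def E_def)
  next
    fix x assume x: "x \<in> T"
    then have "rk P x \<in> ascent_set n e"
      using T'(3) by blast
    then obtain j where "j \<le> K" "rk P x = partial_sum e j"
      using ascent by auto
    then have "x \<in> set ts"
      using in_ts x by (simp add: E_def)
    then show "x \<in> interior ts"
      using T'(2) x by (simp add: interior_def)
  qed
  then show thesis
    using that word(1) mc by blast
qed

lemma FP_eq:
  assumes "1 \<le> n"
  shows "FP P bt tp e = (if monomial n e then int (flag_f P bt tp (ascent_set n e)) else 0)"
proof (cases "monomial n e")
  case False
  then have "{ts. \<exists>k\<ge>1. multichain e ts k} = {}"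
    using monomial_multichain by (auto simp: monomial_def)
  then have "FP P bt tp e = 0"
    unfolding FP_eq_card_multichains by (simp only: card.empty)
  then show ?thesis
    using False by simp
next
  case True
  then obtain i where i: "content_word n e i"
    by (auto simp: monomial_def)
  have "interior ` {ts. \<exists>k\<ge>1. multichain e ts k} = rank_chains (ascent_set n e)"
  proof
    show "interior ` {ts. \<exists>k\<ge>1. multichain e ts k} \<subseteq> rank_chains (ascent_set n e)"
      using interior_in_rank_chains i by blast
    show "rank_chains (ascent_set n e) \<subseteq> interior ` {ts. \<exists>k\<ge>1. multichain e ts k}"
    proof
      fix T assume "T \<in> rank_chains (ascent_set n e)"
      then obtain ts k where "1 \<le> k" "multichain e ts k" "interior ts = T"
        by (rule rank_chain_multichain[OF assms i])
      then show "T \<in> interior ` {ts. \<exists>k\<ge>1. multichain e ts k}"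
        by blast
    qed
  qed
  then have "card {ts. \<exists>k\<ge>1. multichain e ts k} = card (rank_chains (ascent_set n e))"
    using card_image[OF inj_on_interior[of e]] by simp
  then show ?thesis
    using True by (simp add: FP_eq_card_multichains flag_f_eq_card_rank_chains)
qed

lemma FP_eq_sum_Lfun:
  assumes n: "1 \<le> n" and d: "\<forall>T\<subseteq>{1..<n}. int (flag_f P bt tp T) = (\<Sum>S\<in>Pow T. d S)"
  shows "FP P bt tp = (\<lambda>e. \<Sum>S\<in>Pow {1..<n}. d S * Lfun S n e)"
proof
  fix e
  have "ascent_set n e \<subseteq> {1..<n}"
    by (auto simp: ascent_set_def)
  then show "FP P bt tp e = (\<Sum>S\<in>Pow {1..<n}. d S * Lfun S n e)"
    using FP_eq[OF n, of e] d sum_Lfun[of d n e] by simp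
qed

lemma flag_f_empty: "flag_f P bt tp {} = 1"
proof -
  have "rank_chains {} = {{}}"
  proof (intro set_eqI iffI)
    fix T :: "'a set" assume "T \<in> rank_chains {}"
    then have "is_chain P T" "card T = 0"
      by (auto simp: rank_chains_def)
    then show "T \<in> {{}}"
      using finite_chain by auto
  qed (simp add: rank_chains_def is_chain_def)
  then show ?thesis
    by (simp add: flag_f_eq_card_rank_chains)
qed

lemma MC_rank_0:
  assumes "n = 0"
  shows "MC P = {{bt}}"
proof -
  have "M = {bt}" if M: "M \<in> MC P" for M
  proof -
    have "card M = 1"
      using card_MC[OF M] assms by simp
    then obtain x where x: "M = {x}"
      by (auto simp: card_Suc_eq)
    have max: "maximal_chain P M"
      using M by (simp add: MC_def)
    then have "x \<in> P"
      using x by (auto simp: maximal_chain_def is_chain_def)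
    then have "is_chain P (insert bt M)"
      using x bt_in bounded by (auto simp: is_chain_def)
    then have "insert bt M = M"
      using max by (auto simp: maximal_chain_def)
    then show ?thesis
      using x by auto
  qed
  moreover obtain M where "M \<in> MC P"
    using chain_extends_to_MC[of "{}"] by (auto simp: is_chain_def)
  ultimately show ?thesis
    by blast
qed

end

section \<open>Good actions\<close>

locale poset_with_good_action = graded_poset +
  fixes U :: "nat \<Rightarrow> 'a set \<Rightarrow> 'a set"
  assumes good: "good_action P n bt tp U"
begin

lemma U_in_MC: "i \<in> {1..<n} \<Longrightarrow> m \<in> MC P \<Longrightarrow> U i m \<in> MC P"
  and U_idem: "i \<in> {1..<n} \<Longrightarrow> m \<in> MC P \<Longrightarrow> U i (U i m) = U i m"
  and U_far_comm: "i \<in> {1..<n} \<Longrightarrow> j \<in> {1..<n} \<Longrightarrow> m \<in> MC P \<Longrightarrow> i + 2 \<le> j \<Longrightarrow>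
    U i (U j m) = U j (U i m)"
  and U_braid: "1 \<le> i \<Longrightarrow> i + 1 < n \<Longrightarrow> m \<in> MC P \<Longrightarrow>
    U i (U (i + 1) (U i m)) = U (i + 1) (U i (U (i + 1) m))"
  and omega_FP: "omega n (FP P bt tp) = ch n (chiP n U (MC P))"
  using good unfolding good_action_def by blast+

text \<open>The relations of a good action hold only on \<open>MC P\<close>; extending the maps by the identity
  makes them hold everywhere.\<close>

definition U_ext :: "nat \<Rightarrow> 'a set \<Rightarrow> 'a set" where
  "U_ext i m = (if m \<in> MC P then U i m else m)"

sublocale hecke: zero_hecke_action U_ext n
proof
  fix i x assume "i \<in> {1..<n}"
  then show "U_ext i (U_ext i x) = U_ext i x"
    using U_in_MC U_idem by (simp add: U_ext_def)
next
  fix i j x assume ij: "i \<in> {1..<n}" "j \<in> {1..<n}" "i + 2 \<le> j"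
  show "U_ext i (U_ext j x) = U_ext j (U_ext i x)"
    using U_in_MC[OF ij(1)] U_in_MC[OF ij(2)] U_far_comm[OF ij(1,2) _ ij(3)]
    by (simp add: U_ext_def)
next
  fix i x assume "1 \<le> i" "i + 1 < n"
  moreover have "i \<in> {1..<n}" "i + 1 \<in> {1..<n}"
    using calculation by auto
  ultimately show "U_ext i (U_ext (i + 1) (U_ext i x)) = U_ext (i + 1) (U_ext i (U_ext (i + 1) x))"
    using U_in_MC[of i] U_in_MC[of "i + 1"] U_braid by (simp add: U_ext_def)
qed

lemma foldr_U_eq_act:
  assumes "set w \<subseteq> {1..<n}" "m \<in> MC P"
  shows "foldr (\<lambda>i f. U i \<circ> f) w id m = hecke.act w m \<and> hecke.act w m \<in> MC P"
  using assms by (induction w) (auto simp: U_ext_def U_in_MC)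

lemma word_fixes_iff_Des_disjoint:
  assumes w: "set w \<subseteq> {1..<n}" and m: "m \<in> MC P"
  shows "foldr (\<lambda>i f. U i \<circ> f) w id m = m \<longleftrightarrow> set w \<subseteq> {1..<n} - Des n U m"
proof
  assume "foldr (\<lambda>i f. U i \<circ> f) w id m = m"
  then have "hecke.act w m = m"
    using foldr_U_eq_act[OF w m] by simp
  then have "U s m = m" if "s \<in> set w" for s
    using hecke.act_fixed_imp_letter_fixed[OF w \<open>hecke.act w m = m\<close> that] m
    by (simp add: U_ext_def)
  then show "set w \<subseteq> {1..<n} - Des n U m"
    using w by (auto simp: Des_def)
next
  assume "set w \<subseteq> {1..<n} - Des n U m"
  then have "\<forall>s\<in>set w. U_ext s m = m"
    using m by (auto simp: Des_def U_ext_def)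
  then have "hecke.act w m = m"
    by (induct w) auto
  then show "foldr (\<lambda>i f. U i \<circ> f) w id m = m"
    using foldr_U_eq_act[OF w m] by simp
qed

lemma chiP_eq_sum_chiS:
  "chiP n U (MC P)
     = (\<lambda>w. \<Sum>S\<in>Pow {1..<n}. int (card {m\<in>MC P. {1..<n} - Des n U m = S}) * chiS n S w)"
proof
  fix w
  show "chiP n U (MC P) w
    = (\<Sum>S\<in>Pow {1..<n}. int (card {m\<in>MC P. {1..<n} - Des n U m = S}) * chiS n S w)"
  proof (cases "set w \<subseteq> {1..<n}")
    case False
    then show ?thesis
      by (simp add: chiP_def chiS_def)
  next
    case True
    have "(\<Sum>S\<in>{S\<in>Pow {1..<n}. set w \<subseteq> S}. card {m\<in>MC P. {1..<n} - Des n U m = S})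
        = card {m\<in>MC P. set w \<subseteq> {1..<n} - Des n U m}"
      using finite_MC by (intro sum_card_fibres) auto
    also have "{m\<in>MC P. set w \<subseteq> {1..<n} - Des n U m} = {m\<in>MC P. foldr (\<lambda>i f. U i \<circ> f) w id m = m}"
      using word_fixes_iff_Des_disjoint[OF True] by blast
    finally have "(\<Sum>S\<in>{S\<in>Pow {1..<n}. set w \<subseteq> S}. int (card {m\<in>MC P. {1..<n} - Des n U m = S}))
        = int (card {m\<in>MC P. foldr (\<lambda>i f. U i \<circ> f) w id m = m})"
      by (simp flip: of_nat_sum)
    then show ?thesis
      using True sum_chiS[OF True, of "\<lambda>S. int (card {m\<in>MC P. {1..<n} - Des n U m = S})"]
      by (simp add: chiP_def)
  qed
qed

text \<open>Comparing the coefficients of \<open>L\<^sub>S\<close> in \<open>\<omega> F\<^sub>P = ch \<chi>\<^sub>P\<close> identifies the flag \<open>h\<close>-vector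
  with the numbers of maximal chains with given descent set.\<close>

lemma flag_h_eq_card_Des:
  assumes n: "1 \<le> n" and d: "\<forall>T\<subseteq>{1..<n}. int (flag_f P bt tp T) = (\<Sum>S\<in>Pow T. d S)"
    and T: "T \<subseteq> {1..<n}"
  shows "d T = int (card {m\<in>MC P. Des n U m = T})"
proof -
  let ?R = "{1..<n}"
  let ?c = "\<lambda>S. int (card {m\<in>MC P. ?R - Des n U m = S})"
  have "(\<lambda>e. \<Sum>S\<in>Pow ?R. d S * Lfun (?R - S) n e) = (\<lambda>e. \<Sum>S\<in>Pow ?R. ?c S * Lfun S n e)"
    using omega_FP omega_eq[OF FP_eq_sum_Lfun[OF n d]] ch_eq[OF chiP_eq_sum_chiS] by simp
  moreover have "(\<Sum>S\<in>Pow ?R. d S * Lfun (?R - S) n e) = (\<Sum>S\<in>Pow ?R. d (?R - S) * Lfun S n e)" for e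
    by (rule sum.reindex_bij_witness[of _ "\<lambda>S. ?R - S" "\<lambda>S. ?R - S"])
      (auto simp: Diff_Diff_Int Int_absorb1)
  ultimately have "\<forall>e. (\<Sum>S\<in>Pow ?R. d (?R - S) * Lfun S n e) = (\<Sum>S\<in>Pow ?R. ?c S * Lfun S n e)"
    by (metis (no_types, lifting))
  then have "d (?R - (?R - T)) = ?c (?R - T)"
    using Lfun_coeffs_unique[of "\<lambda>S. d (?R - S)" n ?c "?R - T"] by simp
  moreover have "?R - Des n U m = ?R - T \<longleftrightarrow> Des n U m = T" for m
    using T by (auto simp: Des_def)
  ultimately show ?thesis
    using T by (simp add: double_diff)
qed

lemma flag_f_eq_card_Des_subset:
  assumes S: "S \<subseteq> {1..<n}"
  shows "flag_f P bt tp S = card {m\<in>MC P. Des n U m \<subseteq> S}"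
proof (cases "n = 0")
  case True
  then show ?thesis
    using S flag_f_empty MC_rank_0 by (simp add: Des_def)
next
  case False
  obtain d where d: "\<forall>T\<subseteq>{1..<n}. int (flag_f P bt tp T) = (\<Sum>S\<in>Pow T. d S)"
    using ex_subset_sum_inverse[of "{1..<n}" "\<lambda>T. int (flag_f P bt tp T)"] by auto
  have "int (flag_f P bt tp S) = (\<Sum>T\<in>Pow S. int (card {m\<in>MC P. Des n U m = T}))"
    using d S flag_h_eq_card_Des[OF _ d] False by (auto intro!: sum.cong)
  also have "\<dots> = int (card {m\<in>MC P. Des n U m \<subseteq> S})"
  proof -
    have "(\<Sum>T\<in>{T\<in>Pow {1..<n}. T \<subseteq> S}. card {m\<in>MC P. Des n U m = T}) = card {m\<in>MC P. Des n U m \<subseteq> S}"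
      using finite_MC by (intro sum_card_fibres) (auto simp: Des_def)
    moreover have "{T\<in>Pow {1..<n}. T \<subseteq> S} = Pow S"
      using S by auto
    ultimately show ?thesis
      by (simp flip: of_nat_sum)
  qed
  finally show ?thesis
    by simp
qed

end

theorem mainTheorem10:
  fixes P :: "'a::order set" and n :: nat and bt tp :: 'a
    and U :: "nat \<Rightarrow> 'a set \<Rightarrow> 'a set"
  assumes "graded_bounded P n bt tp"
    and "bowtie_free P"
    and "good_action P n bt tp U"
  shows "(\<forall>S\<subseteq>{1..<n}. flag_f P bt tp S = card {m \<in> MC P. Des n U m \<subseteq> S})
         \<and> card {m \<in> MC P. Des n U m = {}} = 1"
proof -
  interpret poset_with_good_action P n bt tp U
    using assms(1,3) by (simp add: poset_with_good_action_def graded_poset_def poset_with_good_action_axioms_def)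
  have "card {m \<in> MC P. Des n U m = {}} = 1"
    using flag_f_eq_card_Des_subset[of "{}"] flag_f_empty by simp
  then show ?thesis
    using flag_f_eq_card_Des_subset by blast
qed

end
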